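(* Let $(X_n)_{n\ge1}$ be a sequence of symmetrical random variables with finite second moments, taking values in a Hilbert space $\mathbb{H}$. Suppose the series $\sum_{n=1}^\infty X_n$ converges almost surely in $\mathbb{H}$, and there is a constant $K>0$ such that for all integers $m\ge0$ and $j\ge1$, $$\mathbb{E}\big(\|X_{m+1}+\cdots+X_{m+j}\|^4\big)\le K\,\Big(\mathbb{E}\big(\|X_{m+1}+\cdots+X_{m+j}\|^2\big)\Big)^2.$$ Then the series $\sum_{n=1}^\infty X_n$ also converges in $L^2(\Omega;\mathbb{H})$, i.e. $\lim_{m\to\infty}\sup_{j\ge1}\mathbb{E}(\|S_{m+j}-S_m\|^2)=0$ where $S_n=X_1+\cdots+X_n$.
   Context: A random variable $X$ with values in $\mathbb{H}$ is symmetrical if $X$ and $-X$ have the same distribution. No independence among the $X_n$ is assumed. *)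

theory Defs
  imports "HOL-Probability.Probability"
begin

definition symmetrical :: "'b measure \<Rightarrow> ('b \<Rightarrow> 'a::real_normed_vector) \<Rightarrow> bool" where
  "symmetrical M X \<longleftrightarrow> distr M borel X = distr M borel (\<lambda>\<omega>. - X \<omega>)"

end

theory Submission
  imports Defs
begin

text \<open>If the \<open>L\<^sup>2\<close> tails did not vanish, there would be \<open>\<epsilon> > 0\<close> and blocks
  \<open>S\<^sub>m\<^sub>+\<^sub>j - S\<^sub>m\<close> starting arbitrarily late with \<open>E \<parallel>S\<^sub>m\<^sub>+\<^sub>j - S\<^sub>m\<parallel>\<^sup>2 > \<epsilon>\<close>. The comparison of the
  fourth and second moments turns this, via the Paley--Zygmund inequality, into a uniform lower
  bound \<open>1/(16K)\<close> on the probability that such a block has norm at least \<open>\<surd>\<epsilon>/2\<close>. But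
  almost sure convergence makes the probability that the partial sums still oscillate by
  \<open>\<surd>\<epsilon>/2\<close> after time \<open>m\<close> tend to \<open>0\<close>.\<close>

lemma power2_norm_sum_le:
  fixes x :: "'i \<Rightarrow> 'a::real_normed_vector"
  shows "norm (\<Sum>i\<in>I. x i)^2 \<le> card I * (\<Sum>i\<in>I. norm (x i)^2)"
proof -
  have "norm (\<Sum>i\<in>I. x i)^2 \<le> (\<Sum>i\<in>I. norm (x i))^2"
    by (intro power_mono norm_sum) simp
  also have "\<dots> \<le> card I * (\<Sum>i\<in>I. norm (x i)^2)"
    using sum_squared_le_sum_of_squares[of "\<lambda>i. norm (x i)" I] by (simp add: mult.commute)
  finally show ?thesis .
qed

lemma nn_integral_power2_norm_sum_finite:
  fixes X :: "'i \<Rightarrow> 'b \<Rightarrow> 'a::real_normed_vector"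
  assumes "\<And>i. i \<in> I \<Longrightarrow> integrable M (\<lambda>\<omega>. norm (X i \<omega>)^2)"
  shows "(\<integral>\<^sup>+\<omega>. ennreal (norm (\<Sum>i\<in>I. X i \<omega>)^2) \<partial>M) < \<infinity>"
proof -
  define bound where "bound \<omega> = card I * (\<Sum>i\<in>I. norm (X i \<omega>)^2)" for \<omega>
  have "integrable M bound"
    unfolding bound_def using assms by (intro integrable_mult_right Bochner_Integration.integrable_sum)
  have "(\<integral>\<^sup>+\<omega>. ennreal (norm (\<Sum>i\<in>I. X i \<omega>)^2) \<partial>M) \<le> (\<integral>\<^sup>+\<omega>. ennreal (bound \<omega>) \<partial>M)"
    unfolding bound_def by (intro nn_integral_mono ennreal_leI power2_norm_sum_le)
  also have "\<dots> = ennreal (integral\<^sup>L M bound)"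
    by (rule nn_integral_eq_integral[OF \<open>integrable M bound\<close>]) (simp add: bound_def sum_nonneg)
  finally show ?thesis
    using le_less_trans by fastforce
qed

lemma (in prob_space) paley_zygmund_half:
  fixes Z :: "'a \<Rightarrow> real"
  assumes Z: "Z \<in> borel_measurable M" "integrable M (\<lambda>\<omega>. Z \<omega>^2)" and K: "K > 0"
    and pos: "0 < expectation Z"
    and moment: "expectation (\<lambda>\<omega>. Z \<omega>^2) \<le> K * (expectation Z)^2"
  shows "1/(4*K) \<le> prob {\<omega>\<in>space M. expectation Z / 2 \<le> Z \<omega>}"
proof -
  define c where "c = expectation Z"
  have c: "c > 0" using pos by (simp add: c_def)
  define A where "A = {\<omega>\<in>space M. c/2 \<le> Z \<omega>}"
  have A: "A \<in> events" unfolding A_def using Z(1) by measurable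
  have "integrable M Z"
    using Z by (rule square_integrable_imp_integrable)
  \<comment> \<open>On \<open>A\<close> this is AM-GM, off \<open>A\<close> it is \<open>Z < c/2\<close>; integrating gives \<open>c \<le> 3c/4 + K c P(A)\<close>.\<close>
  have pointwise: "Z \<omega> \<le> c/2 + Z \<omega>^2 / (4*K*c) + K*c * indicator A \<omega>" if "\<omega> \<in> space M" for \<omega>
  proof (cases "\<omega> \<in> A")
    case True
    have "0 \<le> (Z \<omega> - 2*K*c)^2 / (4*K*c)" using K c by simp
    hence "Z \<omega> \<le> Z \<omega>^2 / (4*K*c) + K*c"
      using K c by (simp add: field_simps power2_eq_square)
    then show ?thesis using True c by simp
  next
    case False
    then have "Z \<omega> < c/2" "indicator A \<omega> = (0::real)"
      using that by (auto simp: A_def)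
    moreover have "0 \<le> Z \<omega>^2 / (4*K*c)"
      using K c by simp
    ultimately show ?thesis
      by simp
  qed
  have square_int: "integrable M (\<lambda>\<omega>. Z \<omega>^2 / (4*K*c))"
    using Z(2) by simp
  have indicator_int: "integrable M (\<lambda>\<omega>. K*c * indicator A \<omega>)"
    using A by (simp add: less_top[symmetric])
  have "integrable M (\<lambda>\<omega>. c/2 + Z \<omega>^2 / (4*K*c) + K*c * indicator A \<omega>)"
    using square_int indicator_int by simp
  then have "c \<le> expectation (\<lambda>\<omega>. c/2 + Z \<omega>^2 / (4*K*c) + K*c * indicator A \<omega>)"
    using integral_mono[OF \<open>integrable M Z\<close> _ pointwise] by (simp only: c_def[symmetric])
  also have "\<dots> = c/2 + expectation (\<lambda>\<omega>. Z \<omega>^2) / (4*K*c) + K*c * prob A"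
    using square_int indicator_int A by (simp add: Bochner_Integration.integral_add prob_space)
  also have "\<dots> \<le> c/2 + c/4 + K*c * prob A"
  proof -
    have "expectation (\<lambda>\<omega>. Z \<omega>^2) / (4*K*c) \<le> K*c^2 / (4*K*c)"
      using moment K c by (intro divide_right_mono) (auto simp: c_def)
    also have "K*c^2 / (4*K*c) = c/4"
      using K c by (simp add: power2_eq_square)
    finally show ?thesis
      by simp
  qed
  finally show ?thesis
    using K c by (simp add: A_def c_def field_simps)
qed

lemma nn_integral_less_imp_measurable_minorant:
  fixes Z :: "'a \<Rightarrow> real"
  assumes nonneg: "\<And>\<omega>. 0 \<le> Z \<omega>" and less: "c < (\<integral>\<^sup>+\<omega>. Z \<omega> \<partial>M)"
  obtains h where "h \<in> borel_measurable M" "\<And>\<omega>. 0 \<le> h \<omega>" "\<And>\<omega>. h \<omega> \<le> Z \<omega>"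
    "c < (\<integral>\<^sup>+\<omega>. h \<omega> \<partial>M)"
proof -
  obtain g where g: "simple_function M g" "g \<le> (\<lambda>\<omega>. ennreal (Z \<omega>))" and "c < integral\<^sup>S M g"
    using less unfolding nn_integral_def by (auto simp: less_SUP_iff)
  have g_le: "g \<omega> \<le> ennreal (Z \<omega>)" for \<omega>
    using g(2) by (simp add: le_fun_def)
  define h where "h \<omega> = enn2real (g \<omega>)" for \<omega>
  have "g \<omega> \<noteq> \<top>" for \<omega>
    using g_le[of \<omega>] by (auto simp: top_unique)
  then have g_eq: "g = (\<lambda>\<omega>. ennreal (h \<omega>))"
    by (simp add: h_def ennreal_enn2real_if)
  show thesis
  proof
    show "h \<in> borel_measurable M"
      unfolding h_def using borel_measurable_simple_function[OF g(1)] by measurable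
    show "0 \<le> h \<omega>" for \<omega>
      by (simp add: h_def)
    show "h \<omega> \<le> Z \<omega>" for \<omega>
      using g_le[of \<omega>] nonneg[of \<omega>] by (simp add: g_eq)
    show "c < (\<integral>\<^sup>+\<omega>. h \<omega> \<partial>M)"
      using \<open>c < integral\<^sup>S M g\<close> nn_integral_eq_simple_integral[OF g(1)] by (simp add: g_eq)
  qed
qed

text \<open>\<open>Z\<close> need not be measurable: in a non-separable space a sum of Borel measurable
  random variables need not be Borel measurable. Paley--Zygmund is applied instead to a
  measurable minorant carrying more than half of the integral of \<open>Z\<close>.\<close>

lemma (in prob_space) paley_zygmund_nn_integral:
  fixes Z :: "'a \<Rightarrow> real"
  assumes nonneg: "\<And>\<omega>. 0 \<le> Z \<omega>" and K: "K > 0"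
    and integral_finite: "(\<integral>\<^sup>+\<omega>. Z \<omega> \<partial>M) < \<infinity>"
    and moment: "(\<integral>\<^sup>+\<omega>. ennreal (Z \<omega>^2) \<partial>M) \<le> ennreal K * (\<integral>\<^sup>+\<omega>. Z \<omega> \<partial>M)^2"
    and less: "ennreal \<epsilon> < (\<integral>\<^sup>+\<omega>. Z \<omega> \<partial>M)"
  obtains B where "B \<in> events" "B \<subseteq> {\<omega>. \<epsilon>/4 \<le> Z \<omega>}" "1/(16*K) \<le> prob B"
proof -
  obtain F where F: "(\<integral>\<^sup>+\<omega>. Z \<omega> \<partial>M) = ennreal F" "0 \<le> F"
    using integral_finite by (auto simp: less_top_ennreal)
  have "0 < F"
    using less F by (metis ennreal_less_zero_iff le_less_trans zero_le)
  have "\<epsilon> < F"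
    using less F by (cases "0 \<le> \<epsilon>") (auto simp: ennreal_less_iff)
  have "ennreal (F/2) < (\<integral>\<^sup>+\<omega>. Z \<omega> \<partial>M)"
    using \<open>0 < F\<close> F by (simp add: ennreal_less_iff)
  then obtain h where h: "h \<in> borel_measurable M" "\<And>\<omega>. 0 \<le> h \<omega>" "\<And>\<omega>. h \<omega> \<le> Z \<omega>"
      and h_large: "ennreal (F/2) < (\<integral>\<^sup>+\<omega>. h \<omega> \<partial>M)"
    using nn_integral_less_imp_measurable_minorant[of Z, OF nonneg] by blast
  have "(\<integral>\<^sup>+\<omega>. h \<omega> \<partial>M) \<le> (\<integral>\<^sup>+\<omega>. Z \<omega> \<partial>M)"
    using h by (intro nn_integral_mono ennreal_leI) simp
  then have "integrable M h"
    using h integral_finite by (intro integrableI_nonneg) (auto simp: le_less_trans)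
  have "(\<integral>\<^sup>+\<omega>. ennreal (h \<omega>^2) \<partial>M) \<le> (\<integral>\<^sup>+\<omega>. ennreal (Z \<omega>^2) \<partial>M)"
    using h by (intro nn_integral_mono) (simp add: power_mono)
  also have "\<dots> \<le> ennreal (K * F^2)"
    using moment F K by (simp add: ennreal_mult ennreal_power)
  finally have h_moment: "(\<integral>\<^sup>+\<omega>. ennreal (h \<omega>^2) \<partial>M) \<le> ennreal (K * F^2)" .
  then have "integrable M (\<lambda>\<omega>. h \<omega>^2)"
    using h by (intro integrableI_nonneg) (auto simp: le_less_trans)
  define c where "c = expectation h"
  have "(\<integral>\<^sup>+\<omega>. h \<omega> \<partial>M) = ennreal c"
    unfolding c_def using \<open>integrable M h\<close> h by (simp add: nn_integral_eq_integral)
  then have "F/2 < c"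
    using h_large F by (simp add: ennreal_less_iff)
  have "expectation (\<lambda>\<omega>. h \<omega>^2) \<le> K * F^2"
    using h_moment \<open>integrable M (\<lambda>\<omega>. h \<omega>^2)\<close> K by (simp add: nn_integral_eq_integral)
  also have "\<dots> \<le> (4*K) * c^2"
    using \<open>F/2 < c\<close> F K power_mono[of F "2*c" 2] by (simp add: power_mult_distrib)
  finally have "expectation (\<lambda>\<omega>. h \<omega>^2) \<le> (4*K) * c^2" .
  moreover have "0 < c"
    using \<open>0 < F\<close> \<open>F/2 < c\<close> by linarith
  ultimately have "1/(4*(4*K)) \<le> prob {\<omega>\<in>space M. c/2 \<le> h \<omega>}"
    using paley_zygmund_half[OF h(1) \<open>integrable M (\<lambda>\<omega>. h \<omega>^2)\<close>, of "4*K"] K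
    by (simp add: c_def)
  moreover have "{\<omega>\<in>space M. c/2 \<le> h \<omega>} \<subseteq> {\<omega>. \<epsilon>/4 \<le> Z \<omega>}"
  proof safe
    fix \<omega> assume "c/2 \<le> h \<omega>"
    then show "\<epsilon>/4 \<le> Z \<omega>"
      using h(3)[of \<omega>] \<open>\<epsilon> < F\<close> \<open>F/2 < c\<close> by linarith
  qed
  ultimately show thesis
    using h(1) by (intro that) auto
qed

definition oscillation_set :: "(nat \<Rightarrow> 'a \<Rightarrow> 'b::metric_space) \<Rightarrow> real \<Rightarrow> nat \<Rightarrow> 'a set" where
  "oscillation_set S \<eta> m = {\<omega>. \<exists>p\<ge>m. \<exists>q\<ge>p. \<eta> \<le> dist (S q \<omega>) (S p \<omega>)}"

lemma oscillation_set_antimono: "n \<le> m \<Longrightarrow> oscillation_set S \<eta> m \<subseteq> oscillation_set S \<eta> n"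
  unfolding oscillation_set_def by (auto intro: order.trans)

lemma not_Cauchy_if_in_oscillation_sets:
  assumes "\<eta> > 0" and "\<And>m. \<omega> \<in> oscillation_set S \<eta> m"
  shows "\<not> Cauchy (\<lambda>n. S n \<omega>)"
proof
  assume "Cauchy (\<lambda>n. S n \<omega>)"
  then obtain m where m: "\<And>p q. p \<ge> m \<Longrightarrow> q \<ge> m \<Longrightarrow> dist (S q \<omega>) (S p \<omega>) < \<eta>"
    using metric_CauchyD \<open>\<eta> > 0\<close> by meson
  obtain p q where "p \<ge> m" "q \<ge> p" "\<eta> \<le> dist (S q \<omega>) (S p \<omega>)"
    using assms(2)[of m] unfolding oscillation_set_def by blast
  then show False
    using m[of p q] by simp
qed

lemma (in finite_measure) measure_tendsto_0_if_subset_oscillation_set: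
  fixes S :: "nat \<Rightarrow> 'a \<Rightarrow> 'b::metric_space"
  assumes Cauchy: "AE \<omega> in M. Cauchy (\<lambda>n. S n \<omega>)" and "\<eta> > 0"
    and B: "\<And>m. B m \<in> sets M" "\<And>m. B m \<subseteq> oscillation_set S \<eta> m"
  shows "(\<lambda>m. measure M (B m)) \<longlonglongrightarrow> 0"
proof -
  obtain N where N: "N \<in> null_sets M" "{\<omega>\<in>space M. \<not> Cauchy (\<lambda>n. S n \<omega>)} \<subseteq> N"
    using Cauchy by (auto elim!: AE_E)
  define D where "D m = (\<Union>k\<in>{m..}. B k)" for m
  have D_sets: "range D \<subseteq> sets M"
    using B(1) by (auto simp: D_def)
  have "decseq D"
    unfolding decseq_def D_def by (intro allI impI UN_mono) auto
  have "(\<Inter>m. D m) \<subseteq> N"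
  proof
    fix \<omega> assume \<omega>: "\<omega> \<in> (\<Inter>m. D m)"
    have "\<omega> \<in> oscillation_set S \<eta> m" for m
    proof -
      obtain k where "m \<le> k" "\<omega> \<in> B k"
        using \<omega> by (auto simp: D_def)
      have "\<omega> \<in> oscillation_set S \<eta> k"
        using B(2)[of k] \<open>\<omega> \<in> B k\<close> by (rule subsetD)
      then show ?thesis
        using oscillation_set_antimono[OF \<open>m \<le> k\<close>] by (rule subsetD[rotated])
    qed
    then have "\<not> Cauchy (\<lambda>n. S n \<omega>)"
      by (rule not_Cauchy_if_in_oscillation_sets[OF \<open>\<eta> > 0\<close>])
    moreover have "\<omega> \<in> space M"
      using \<omega> D_sets sets.sets_into_space[of "D 0" M] by blast
    ultimately show "\<omega> \<in> N"
      using N(2) by blast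
  qed
  moreover have "(\<Inter>m. D m) \<in> sets M"
    using D_sets by auto
  ultimately have "measure M (\<Inter>m. D m) = 0"
    by (intro measure_eq_0_null_sets null_sets_subset[OF N(1)])
  then have D_lim: "(\<lambda>m. measure M (D m)) \<longlonglongrightarrow> 0"
    using finite_Lim_measure_decseq[OF D_sets \<open>decseq D\<close>] by simp
  have "\<forall>m. norm (measure M (B m)) \<le> measure M (D m)"
    using D_sets by (auto simp: D_def intro!: finite_measure_mono)
  then show ?thesis
    by (rule Lim_null_comparison[OF always_eventually D_lim])
qed

lemma (in finite_measure) eventually_measure_less_if_subset_oscillation_set:
  fixes S :: "nat \<Rightarrow> 'a \<Rightarrow> 'b::metric_space"
  assumes Cauchy: "AE \<omega> in M. Cauchy (\<lambda>n. S n \<omega>)" and "\<eta> > 0" and "\<delta> > 0"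
  shows "eventually (\<lambda>m. \<forall>B\<in>sets M. B \<subseteq> oscillation_set S \<eta> m \<longrightarrow> measure M B < \<delta>) sequentially"
proof (rule ccontr)
  assume "\<not> ?thesis"
  then have "\<forall>n. \<exists>m\<ge>n. \<exists>B\<in>sets M. B \<subseteq> oscillation_set S \<eta> m \<and> \<delta> \<le> measure M B"
    by (auto simp: eventually_sequentially not_less)
  then have "\<exists>B. B \<in> sets M \<and> B \<subseteq> oscillation_set S \<eta> n \<and> \<delta> \<le> measure M B" for n
    using oscillation_set_antimono by (meson order.trans)
  then obtain B where B: "\<And>n. B n \<in> sets M" "\<And>n. B n \<subseteq> oscillation_set S \<eta> n"
      "\<And>n. \<delta> \<le> measure M (B n)"
    by metis
  have "(\<lambda>n. measure M (B n)) \<longlonglongrightarrow> 0"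
    using Cauchy \<open>\<eta> > 0\<close> B(1,2) by (rule measure_tendsto_0_if_subset_oscillation_set)
  then have "\<delta> \<le> 0"
    using B(3) by (intro LIMSEQ_le_const) auto
  then show False
    using \<open>\<delta> > 0\<close> by simp
qed

lemma ennreal_tendsto_0_if_eventually_le:
  fixes f :: "'a \<Rightarrow> ennreal"
  assumes "\<And>\<epsilon>. 0 < \<epsilon> \<Longrightarrow> eventually (\<lambda>x. f x \<le> ennreal \<epsilon>) F"
  shows "(f \<longlongrightarrow> 0) F"
proof (rule order_tendstoI)
  fix a :: ennreal assume "0 < a"
  then obtain b where "0 < b" "b < a"
    using dense by blast
  then obtain \<epsilon> where "b = ennreal \<epsilon>" "0 < \<epsilon>"
    by (metis ennreal_less_zero_iff less_top_ennreal order_less_trans top_greatest le_less_trans ennreal_less_top top.not_eq_extremum)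
  then show "eventually (\<lambda>x. f x < a) F"
    using assms[of \<epsilon>] \<open>b < a\<close> by (auto elim: eventually_mono)
qed (simp add: not_less_zero)

lemma (in prob_space) L2_Cauchy_if_AE_Cauchy_moment_bound:
  fixes S :: "nat \<Rightarrow> 'a \<Rightarrow> 'b::real_normed_vector"
  assumes Cauchy: "AE \<omega> in M. Cauchy (\<lambda>n. S n \<omega>)" and K: "K > 0"
    and integral_finite: "\<And>m j. j \<ge> 1 \<Longrightarrow> (\<integral>\<^sup>+\<omega>. norm (S (m+j) \<omega> - S m \<omega>)^2 \<partial>M) < \<infinity>"
    and moment: "\<And>m j. j \<ge> 1 \<Longrightarrow>
      (\<integral>\<^sup>+\<omega>. norm (S (m+j) \<omega> - S m \<omega>)^4 \<partial>M) \<le> ennreal K * (\<integral>\<^sup>+\<omega>. norm (S (m+j) \<omega> - S m \<omega>)^2 \<partial>M)^2"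
  shows "(\<lambda>m. SUP j\<in>{1..}. \<integral>\<^sup>+\<omega>. norm (S (m+j) \<omega> - S m \<omega>)^2 \<partial>M) \<longlonglongrightarrow> 0"
proof (rule ennreal_tendsto_0_if_eventually_le)
  fix \<epsilon> :: real assume "0 < \<epsilon>"
  have "eventually (\<lambda>m. \<forall>B\<in>events. B \<subseteq> oscillation_set S (sqrt (\<epsilon>/4)) m \<longrightarrow> prob B < 1/(16*K))
      sequentially"
    using \<open>0 < \<epsilon>\<close> K by (intro eventually_measure_less_if_subset_oscillation_set[OF Cauchy]) auto
  then show "eventually (\<lambda>m. (SUP j\<in>{1..}. \<integral>\<^sup>+\<omega>. norm (S (m+j) \<omega> - S m \<omega>)^2 \<partial>M) \<le> ennreal \<epsilon>) sequentially"
  proof eventually_elim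
    case (elim m)
    have "(\<integral>\<^sup>+\<omega>. norm (S (m+j) \<omega> - S m \<omega>)^2 \<partial>M) \<le> ennreal \<epsilon>" if j: "j \<ge> 1" for j
    proof (rule ccontr)
      assume "\<not> ?thesis"
      then have less: "ennreal \<epsilon> < (\<integral>\<^sup>+\<omega>. norm (S (m+j) \<omega> - S m \<omega>)^2 \<partial>M)"
        by (simp add: not_le)
      have "(\<integral>\<^sup>+\<omega>. ennreal ((norm (S (m+j) \<omega> - S m \<omega>)^2)^2) \<partial>M)
          \<le> ennreal K * (\<integral>\<^sup>+\<omega>. norm (S (m+j) \<omega> - S m \<omega>)^2 \<partial>M)^2"
        using moment[OF j] by (simp flip: power_mult)
      then obtain B where B: "B \<in> events" "B \<subseteq> {\<omega>. \<epsilon>/4 \<le> norm (S (m+j) \<omega> - S m \<omega>)^2}"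
          "1/(16*K) \<le> prob B"
        using paley_zygmund_nn_integral[OF zero_le_power2 K integral_finite[OF j] _ less] by blast
      have "B \<subseteq> oscillation_set S (sqrt (\<epsilon>/4)) m"
      proof
        fix \<omega> assume "\<omega> \<in> B"
        then have "\<epsilon>/4 \<le> norm (S (m+j) \<omega> - S m \<omega>)^2"
          using B(2) by blast
        then have "sqrt (\<epsilon>/4) \<le> dist (S (m+j) \<omega>) (S m \<omega>)"
          unfolding dist_norm by (rule real_le_lsqrt[OF norm_ge_zero])
        then show "\<omega> \<in> oscillation_set S (sqrt (\<epsilon>/4)) m"
          unfolding oscillation_set_def using le_add1 by blast
      qed
      then have "prob B < 1/(16*K)"
        using elim B(1) by blast
      then show False
        using B(3) by simp
    qed
    then show ?case
      by (auto intro: SUP_least)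
  qed
qed

theorem theorem3:
  fixes M :: "'b measure"
    and X :: "nat \<Rightarrow> 'b \<Rightarrow> 'a::{real_inner, complete_space}"
    and K :: real
  assumes "prob_space M"
    and meas: "\<And>n. n \<ge> 1 \<Longrightarrow> X n \<in> borel_measurable M"
    and symm: "\<And>n. n \<ge> 1 \<Longrightarrow> symmetrical M (X n)"
    and second: "\<And>n. n \<ge> 1 \<Longrightarrow> integrable M (\<lambda>\<omega>. (norm (X n \<omega>))^2)"
    and as_conv: "AE \<omega> in M. convergent (\<lambda>n. \<Sum>i = 1..n. X i \<omega>)"
    and K_pos: "K > 0"
    and fourth: "\<And>m j. j \<ge> 1 \<Longrightarrow>
        (\<integral>\<^sup>+ \<omega>. ennreal ((norm (\<Sum>i = m+1..m+j. X i \<omega>))^4) \<partial>M)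
          \<le> ennreal K * (\<integral>\<^sup>+ \<omega>. ennreal ((norm (\<Sum>i = m+1..m+j. X i \<omega>))^2) \<partial>M)^2"
  shows "(\<lambda>m. SUP j\<in>{1..}. \<integral>\<^sup>+ \<omega>. ennreal ((norm ((\<Sum>i = 1..m+j. X i \<omega>) - (\<Sum>i = 1..m. X i \<omega>)))^2) \<partial>M)
           \<longlonglongrightarrow> 0"
proof -
  interpret prob_space M by fact
  define S where "S n \<omega> = (\<Sum>i = 1..n. X i \<omega>)" for n \<omega>
  have increment: "S (m+j) \<omega> - S m \<omega> = (\<Sum>i = m+1..m+j. X i \<omega>)" for m j \<omega>
    using sum.ub_add_nat[of 1 m "\<lambda>i. X i \<omega>" j] by (simp add: S_def)
  have "(\<lambda>m. SUP j\<in>{1..}. \<integral>\<^sup>+\<omega>. norm (S (m+j) \<omega> - S m \<omega>)^2 \<partial>M) \<longlonglongrightarrow> 0"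
  proof (rule L2_Cauchy_if_AE_Cauchy_moment_bound[OF _ K_pos])
    show "AE \<omega> in M. Cauchy (\<lambda>n. S n \<omega>)"
      using as_conv by eventually_elim (simp add: S_def convergent_Cauchy)
    show "(\<integral>\<^sup>+\<omega>. norm (S (m+j) \<omega> - S m \<omega>)^2 \<partial>M) < \<infinity>" for m j
      unfolding increment by (intro nn_integral_power2_norm_sum_finite second) simp
    show "(\<integral>\<^sup>+\<omega>. norm (S (m+j) \<omega> - S m \<omega>)^4 \<partial>M)
        \<le> ennreal K * (\<integral>\<^sup>+\<omega>. norm (S (m+j) \<omega> - S m \<omega>)^2 \<partial>M)^2" if "j \<ge> 1" for m j
      unfolding increment by (rule fourth[OF that])
  qed
  then show ?thesis
    by (simp only: S_def)
qed

end
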